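(* Let $X_1,X_2,X_3,Y_1,Y_2,Y_3$ be independent real variables ranging over the open positive orthant $(0,\infty)^6$, and consider the first-order linear system of partial differential equations for an unknown smooth function $\tau=\tau(X_1,X_2,X_3,Y_1,Y_2,Y_3)$, writing $\partial_{X_i}=\partial/\partial X_i$, $\partial_{Y_i}=\partial/\partial Y_i$: $$\Big(2\sum_{i=1}^3 X_i\partial_{X_i}-\sum_{i=1}^3 Y_i\partial_{Y_i}\Big)\tau=0,\qquad \Big(-\sum_{i=1}^3 X_i\partial_{X_i}+2\sum_{i=1}^3 Y_i\partial_{Y_i}\Big)\tau=0,$$ $$\Big(X_1(X_1+2X_2+2X_3)\partial_{X_1}+X_2(X_2+2X_3)\partial_{X_2}+X_3^2\partial_{X_3}-Y_1(X_2+X_3)\partial_{Y_1}-Y_2X_3\partial_{Y_2}\Big)\tau=0,$$ $$\Big(Y_1(Y_1+2Y_2+2Y_3)\partial_{Y_1}+Y_2(Y_2+2Y_3)\partial_{Y_2}+Y_3^2\partial_{Y_3}-X_1(Y_1+Y_2+Y_3)\partial_{X_1}-X_2(Y_2+Y_3)\partial_{X_2}-X_3Y_3\partial_{X_3}\Big)\tau=0.$$ Then the function $$\tau_1^{(3)}=\frac{\Big(\sum_{1\le i\le j\le 2}X_iY_j\Big)\Big(\sum_{1\le i\le j\le 2}X_{i+1}Y_{j+1}\Big)}{X_2Y_2\sum_{1\le i\le j\le 3}X_iY_j} =\frac{(X_1Y_1+X_1Y_2+X_2Y_2)(X_2Y_2+X_2Y_3+X_3Y_3)}{X_2Y_2\,(X_1Y_1+X_1Y_2+X_1Y_3+X_2Y_2+X_2Y_3+X_3Y_3)}$$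 is a solution of this system, and it is the only nontrivial solution up to functional dependence: every solution is (locally) of the form $F\big(\tau_1^{(3)}\big)$ for some function $F$ of one variable.
   Context: This system arises in the construction of the lattice $W_3$ algebra (the $\mathfrak{sl}_3$ case), with the Poisson bracket on the variables given by $\{X_i,X_j\}=2X_iX_j$, $\{Y_i,Y_j\}=2Y_iY_j$ for $i<j$, $\{X_i,X_i\}=\{Y_i,Y_i\}=0$, $\{X_i,Y_j\}=X_iY_j$ if $i>j$ and $\{X_i,Y_j\}=-X_iY_j$ if $i\le j$. The first two operators express that solutions have zero weight; the last two come from the screening operators $X_1+X_2+X_3$ and $Y_1+Y_2+Y_3$. *)

theory Defs
  imports "HOL-Analysis.Analysis"
begin

text \<open>Points of R^6 are vectors x :: real^6 with coordinates
  X1 = x$1, X2 = x$2, X3 = x$3, Y1 = x$4, Y2 = x$5, Y3 = x$6.\<close>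

definition pos_orthant :: "(real^6) set" where
  "pos_orthant = {x. \<forall>i. 0 < x $ i}"

definition pd :: "6 \<Rightarrow> (real^6 \<Rightarrow> real) \<Rightarrow> real^6 \<Rightarrow> real" where
  "pd i f x = frechet_derivative f (at x) (axis i 1)"

fun Ck_on :: "nat \<Rightarrow> (real^6) set \<Rightarrow> (real^6 \<Rightarrow> real) \<Rightarrow> bool" where
  "Ck_on 0 S f = continuous_on S f"
| "Ck_on (Suc k) S f = (f differentiable_on S \<and> (\<forall>i. Ck_on k S (pd i f)))"

definition smooth_on :: "(real^6) set \<Rightarrow> (real^6 \<Rightarrow> real) \<Rightarrow> bool" where
  "smooth_on S f = (\<forall>k. Ck_on k S f)"

definition D1 :: "(real^6 \<Rightarrow> real) \<Rightarrow> real^6 \<Rightarrow> real" where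
  "D1 f x = 2 * (x$1 * pd 1 f x + x$2 * pd 2 f x + x$3 * pd 3 f x)
           - (x$4 * pd 4 f x + x$5 * pd 5 f x + x$6 * pd 6 f x)"

definition D2 :: "(real^6 \<Rightarrow> real) \<Rightarrow> real^6 \<Rightarrow> real" where
  "D2 f x = - (x$1 * pd 1 f x + x$2 * pd 2 f x + x$3 * pd 3 f x)
           + 2 * (x$4 * pd 4 f x + x$5 * pd 5 f x + x$6 * pd 6 f x)"

definition D3 :: "(real^6 \<Rightarrow> real) \<Rightarrow> real^6 \<Rightarrow> real" where
  "D3 f x = x$1 * (x$1 + 2 * x$2 + 2 * x$3) * pd 1 f x
           + x$2 * (x$2 + 2 * x$3) * pd 2 f x
           + (x$3)^2 * pd 3 f x
           - x$4 * (x$2 + x$3) * pd 4 f x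
           - x$5 * x$3 * pd 5 f x"

definition D4 :: "(real^6 \<Rightarrow> real) \<Rightarrow> real^6 \<Rightarrow> real" where
  "D4 f x = x$4 * (x$4 + 2 * x$5 + 2 * x$6) * pd 4 f x
           + x$5 * (x$5 + 2 * x$6) * pd 5 f x
           + (x$6)^2 * pd 6 f x
           - x$1 * (x$4 + x$5 + x$6) * pd 1 f x
           - x$2 * (x$5 + x$6) * pd 2 f x
           - x$3 * x$6 * pd 3 f x"

definition is_solution :: "(real^6 \<Rightarrow> real) \<Rightarrow> bool" where
  "is_solution f \<longleftrightarrow> smooth_on pos_orthant f \<and>
     (\<forall>x\<in>pos_orthant. D1 f x = 0 \<and> D2 f x = 0 \<and> D3 f x = 0 \<and> D4 f x = 0)"

definition tau13 :: "real^6 \<Rightarrow> real" where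
  "tau13 x =
     ((x$1 * x$4 + x$1 * x$5 + x$2 * x$5) * (x$2 * x$5 + x$2 * x$6 + x$3 * x$6)) /
     (x$2 * x$5 * (x$1 * x$4 + x$1 * x$5 + x$1 * x$6 + x$2 * x$5 + x$2 * x$6 + x$3 * x$6))"

end

theory Submission
  imports Defs
begin

text \<open>The first two operators combine to the Euler operators of the \<open>X\<close>- and of the
  \<open>Y\<close>-variables, and the last two integrate explicitly: in the partial sums
  \<open>S\<^sub>k = X\<^sub>k + \<dots> + X\<^sub>3\<close> the third operator is the Riccati field \<open>S\<^sub>k' = S\<^sub>k\<^sup>2\<close>,
  and the fourth one is the same field in \<open>T\<^sub>k = Y\<^sub>k + \<dots> + Y\<^sub>3\<close>. So every solution is
  invariant under two scalings and two explicit flows.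
  With \<open>P\<^sub>k = \<Sum>\<^bsub>k \<le> i \<le> j \<le> 3\<^esub> X\<^sub>i Y\<^sub>j\<close>, a point of the orthant is determined
  by the three plane points \<open>(c\<^sub>k, w\<^sub>k) = (S\<^sub>k / P\<^sub>k, 1 / P\<^sub>k)\<close>, on which the flows act by
  the affine maps \<open>c \<mapsto> c - t\<close>, \<open>w \<mapsto> w - s c\<close> and by scalings. The only invariant of
  three points under this group is the ratio \<open>(c\<^sub>1 - c\<^sub>3) / (c\<^sub>2 - c\<^sub>3)\<close>, and this ratio
  is \<open>\<tau>\<^sub>1\<^sup>(\<^sup>3\<^sup>)\<close>. Near a base point \<open>p\<close>, a composite of the flows whose parameters
  depend continuously on \<open>x\<close> moves \<open>x\<close> to the unique point sharing all coordinates with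
  \<open>p\<close> except \<open>c\<^sub>1\<close>, and that one is a function of \<open>\<tau>\<^sub>1\<^sup>(\<^sup>3\<^sup>)(x)\<close> alone.\<close>

section \<open>Functions of class \<open>C\<^sup>k\<close>\<close>

lemma pd_eq_derivative: "(f has_derivative f') (at x) \<Longrightarrow> pd i f x = f' (axis i 1)"
  unfolding pd_def by (metis frechet_derivative_at)

lemma Ck_on_Suc_imp_Ck_on: "Ck_on (Suc k) S f \<Longrightarrow> Ck_on k S f"
  by (induction k arbitrary: f) (auto simp: differentiable_imp_continuous_on)

lemma Ck_on_has_derivative:
  "open S \<Longrightarrow> Ck_on (Suc k) S f \<Longrightarrow> x \<in> S \<Longrightarrow> (f has_derivative frechet_derivative f (at x)) (at x)"
  by (simp add: differentiable_on_eq_differentiable_at frechet_derivative_works[symmetric])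

lemma Ck_on_cong:
  assumes "open S" "\<And>x. x \<in> S \<Longrightarrow> f x = g x" "Ck_on k S f"
  shows "Ck_on k S g"
  using assms(2,3)
proof (induction k arbitrary: f g)
  case 0
  then show ?case using continuous_on_cong by force
next
  case (Suc k)
  have g': "(g has_derivative frechet_derivative f (at x)) (at x)" if "x \<in> S" for x
    using Ck_on_has_derivative[OF \<open>open S\<close> Suc.prems(2) that] \<open>open S\<close> that Suc.prems(1)
    by (rule has_derivative_transform_within_open) auto
  have "g differentiable_on S"
    using g'
    by (auto simp: differentiable_on_def differentiable_def intro: has_derivative_at_withinI)
  moreover have "pd i f x = pd i g x" if "x \<in> S" for i x
    unfolding pd_def[of i f] using pd_eq_derivative[OF g'[OF that]] by simp
  ultimately show ?case using Suc by (metis Ck_on.simps(2))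
qed

lemma Ck_on_add:
  assumes "open S" "Ck_on k S f" "Ck_on k S g"
  shows "Ck_on k S (\<lambda>x. f x + g x)"
  using assms(2,3)
proof (induction k arbitrary: f g)
  case (Suc k)
  note f' = Ck_on_has_derivative[OF \<open>open S\<close> Suc.prems(1)]
    and g' = Ck_on_has_derivative[OF \<open>open S\<close> Suc.prems(2)]
  have "pd i f x + pd i g x = pd i (\<lambda>x. f x + g x) x" if "x \<in> S" for i x
    unfolding pd_def[of i f] pd_def[of i g]
    using pd_eq_derivative[OF has_derivative_add[OF f'[OF that] g'[OF that]]] by simp
  moreover have "Ck_on k S (\<lambda>x. pd i f x + pd i g x)" for i
    using Suc by simp
  ultimately have "Ck_on k S (pd i (\<lambda>x. f x + g x))" for i
    by (auto intro: Ck_on_cong[OF \<open>open S\<close>, of "\<lambda>x. pd i f x + pd i g x"])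
  then show ?case using Suc.prems by (auto intro: differentiable_on_add)
qed (auto intro: continuous_on_add)

lemma Ck_on_mult:
  assumes "open S" "Ck_on k S f" "Ck_on k S g"
  shows "Ck_on k S (\<lambda>x. f x * g x)"
  using assms(2,3)
proof (induction k arbitrary: f g)
  case (Suc k)
  note f' = Ck_on_has_derivative[OF \<open>open S\<close> Suc.prems(1)]
    and g' = Ck_on_has_derivative[OF \<open>open S\<close> Suc.prems(2)]
  have "f x * pd i g x + pd i f x * g x = pd i (\<lambda>x. f x * g x) x" if "x \<in> S" for i x
    unfolding pd_def[of i f] pd_def[of i g]
    using pd_eq_derivative[OF has_derivative_mult[OF f'[OF that] g'[OF that]]] by simp
  moreover have "Ck_on k S (\<lambda>x. f x * pd i g x + pd i f x * g x)" for i
    using Suc Ck_on_Suc_imp_Ck_on by (auto intro!: Ck_on_add[OF \<open>open S\<close>])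
  ultimately have "Ck_on k S (pd i (\<lambda>x. f x * g x))" for i
    by (auto intro: Ck_on_cong[OF \<open>open S\<close>, of "\<lambda>x. f x * pd i g x + pd i f x * g x"])
  then show ?case using Suc.prems by (auto intro: differentiable_on_mult)
qed (auto intro: continuous_on_mult)

lemma Ck_on_const: "Ck_on k S (\<lambda>x. c)"
proof (induction k arbitrary: c)
  case (Suc k)
  have "pd i (\<lambda>x. c) = (\<lambda>x. 0)" for i by (simp add: pd_def fun_eq_iff)
  then show ?case using Suc by simp
qed simp

lemma Ck_on_component:
  assumes "open S"
  shows "Ck_on k S (\<lambda>x. x $ j)"
proof (cases k)
  case (Suc k')
  have "pd i (\<lambda>x. x $ j) = (\<lambda>x. axis i 1 $ j)" for i
    using pd_eq_derivative[OF bounded_linear_imp_has_derivative[OF bounded_linear_vec_nth]] by auto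
  then show ?thesis
    using Suc Ck_on_const bounded_linear_imp_differentiable_on[OF bounded_linear_vec_nth] by simp
qed (simp add: continuous_on_component continuous_on_id)

lemma Ck_on_inverse:
  assumes "open S" "Ck_on k S f" "\<And>x. x \<in> S \<Longrightarrow> f x \<noteq> 0"
  shows "Ck_on k S (\<lambda>x. inverse (f x))"
  using assms(2,3)
proof (induction k arbitrary: f)
  case (Suc k)
  note f' = Ck_on_has_derivative[OF \<open>open S\<close> Suc.prems(1)]
  have "(-1) * (inverse (f x) * (pd i f x * inverse (f x))) = pd i (\<lambda>x. inverse (f x)) x"
    if "x \<in> S" for i x
    unfolding pd_def[of i f]
    using pd_eq_derivative[OF Deriv.has_derivative_inverse[OF Suc.prems(2)[OF that] f'[OF that]]]
    by (simp add: mult.assoc)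
  moreover have "Ck_on k S (\<lambda>x. (-1) * (inverse (f x) * (pd i f x * inverse (f x))))" for i
    using Suc Ck_on_Suc_imp_Ck_on[OF Suc.prems(1)]
    by (intro Ck_on_mult[OF \<open>open S\<close>] Ck_on_const) auto
  ultimately have "Ck_on k S (pd i (\<lambda>x. inverse (f x)))" for i
    by (auto intro: Ck_on_cong[OF \<open>open S\<close>,
          of "\<lambda>x. (-1) * (inverse (f x) * (pd i f x * inverse (f x)))"])
  then show ?case using Suc.prems by (auto intro!: differentiable_on_inverse)
qed (auto intro: continuous_on_inverse)

lemma forall_6: "(\<forall>i::6. P i) \<longleftrightarrow> P 1 \<and> P 2 \<and> P 3 \<and> P 4 \<and> P 5 \<and> P 6"
proof -
  have "i = 1 \<or> i = 2 \<or> i = 3 \<or> i = 4 \<or> i = 5 \<or> i = 6" for i :: 6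
  proof (induct i)
    case (of_int z)
    then have "z = 0 \<or> z = 1 \<or> z = 2 \<or> z = 3 \<or> z = 4 \<or> z = 5" by fastforce
    then show ?case by auto
  qed
  then show ?thesis by metis
qed

definition vec6 :: "real \<Rightarrow> real \<Rightarrow> real \<Rightarrow> real \<Rightarrow> real \<Rightarrow> real \<Rightarrow> real^6" where
  "vec6 a b c d e f = a *\<^sub>R axis 1 1 + b *\<^sub>R axis 2 1 + c *\<^sub>R axis 3 1 + d *\<^sub>R axis 4 1
     + e *\<^sub>R axis 5 1 + f *\<^sub>R axis 6 1"

lemma vec6_nth [simp]:
  "vec6 a b c d e f $ 1 = a" "vec6 a b c d e f $ 2 = b" "vec6 a b c d e f $ 3 = c"
  "vec6 a b c d e f $ 4 = d" "vec6 a b c d e f $ 5 = e" "vec6 a b c d e f $ 6 = f"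
  by (simp_all add: vec6_def axis_def)

lemma vec6_eqI:
  "x $ 1 = y $ 1 \<Longrightarrow> x $ 2 = y $ 2 \<Longrightarrow> x $ 3 = y $ 3 \<Longrightarrow> x $ 4 = y $ 4 \<Longrightarrow> x $ 5 = y $ 5
    \<Longrightarrow> x $ 6 = y $ 6 \<Longrightarrow> x = (y :: real^6)"
  by (simp add: vec_eq_iff forall_6)

lemma linear_vec6:
  fixes L :: "real^6 \<Rightarrow> real"
  assumes "linear L"
  shows "L (vec6 a b c d e f) = a * L (axis 1 1) + b * L (axis 2 1) + c * L (axis 3 1)
    + d * L (axis 4 1) + e * L (axis 5 1) + f * L (axis 6 1)"
  by (simp add: vec6_def linear_add[OF assms] linear_scale[OF assms])

lemma has_vector_derivative_vec6:
  assumes "(a has_real_derivative a') (at t within T)" "(b has_real_derivative b') (at t within T)"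
    "(c has_real_derivative c') (at t within T)" "(d has_real_derivative d') (at t within T)"
    "(e has_real_derivative e') (at t within T)" "(f has_real_derivative f') (at t within T)"
  shows "((\<lambda>\<sigma>. vec6 (a \<sigma>) (b \<sigma>) (c \<sigma>) (d \<sigma>) (e \<sigma>) (f \<sigma>)) has_vector_derivative
    vec6 a' b' c' d' e' f') (at t within T)"
proof -
  have scaled: "((\<lambda>\<sigma>. g \<sigma> *\<^sub>R v) has_vector_derivative g' *\<^sub>R v) (at t within T)"
    if "(g has_real_derivative g') (at t within T)" for g g' and v :: "real^6"
    using has_vector_derivative_scaleR[OF that has_vector_derivative_const, of v] by simp
  show ?thesis unfolding vec6_def using assms by (intro has_vector_derivative_add scaled)
qed

lemma has_derivative_component [derivative_intros]:
  "((\<lambda>x :: 'a::real_normed_vector^'n. x $ i) has_derivative (\<lambda>h. h $ i)) F"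
  by (rule bounded_linear_imp_has_derivative) (rule bounded_linear_vec_nth)

lemma pos_orthant_iff:
  "x \<in> pos_orthant \<longleftrightarrow> 0 < x $ 1 \<and> 0 < x $ 2 \<and> 0 < x $ 3 \<and> 0 < x $ 4 \<and> 0 < x $ 5 \<and> 0 < x $ 6"
  by (simp add: pos_orthant_def forall_6)

lemma open_pos_orthant: "open pos_orthant"
proof -
  have "pos_orthant = (\<Inter>i. {x. 0 < x $ i})" by (auto simp: pos_orthant_def)
  moreover have "open (\<Inter>i. {x :: real^6. 0 < x $ i})"
    by (intro open_INT) (auto intro: open_halfspace_component_gt_cart)
  ultimately show ?thesis by simp
qed

section \<open>The operators as vector fields\<close>

definition field1 :: "real^6 \<Rightarrow> real^6" where
  "field1 x = vec6 (2 * x$1) (2 * x$2) (2 * x$3) (- x$4) (- x$5) (- x$6)"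

definition field2 :: "real^6 \<Rightarrow> real^6" where
  "field2 x = vec6 (- x$1) (- x$2) (- x$3) (2 * x$4) (2 * x$5) (2 * x$6)"

definition field3 :: "real^6 \<Rightarrow> real^6" where
  "field3 x = vec6 (x$1 * (x$1 + 2 * x$2 + 2 * x$3)) (x$2 * (x$2 + 2 * x$3)) ((x$3)\<^sup>2)
     (- x$4 * (x$2 + x$3)) (- x$5 * x$3) 0"

definition field4 :: "real^6 \<Rightarrow> real^6" where
  "field4 x = vec6 (- x$1 * (x$4 + x$5 + x$6)) (- x$2 * (x$5 + x$6)) (- x$3 * x$6)
     (x$4 * (x$4 + 2 * x$5 + 2 * x$6)) (x$5 * (x$5 + 2 * x$6)) ((x$6)\<^sup>2)"

lemma D_eq_frechet_derivative:
  assumes "f differentiable at x"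
  shows "D1 f x = frechet_derivative f (at x) (field1 x)"
    and "D2 f x = frechet_derivative f (at x) (field2 x)"
    and "D3 f x = frechet_derivative f (at x) (field3 x)"
    and "D4 f x = frechet_derivative f (at x) (field4 x)"
  using linear_vec6[OF linear_frechet_derivative[OF assms]]
  by (simp_all add: field1_def field2_def field3_def field4_def D1_def D2_def D3_def D4_def pd_def
      algebra_simps)

definition "S1 (x :: real^6) = x$1 + x$2 + x$3"
definition "S2 (x :: real^6) = x$2 + x$3"
definition "S3 (x :: real^6) = x$3"

definition "T1 (x :: real^6) = x$4 + x$5 + x$6"
definition "T2 (x :: real^6) = x$5 + x$6"
definition "T3 (x :: real^6) = x$6"

definition "P1 x = x$1 * T1 x + x$2 * T2 x + x$3 * T3 x"
definition "P2 x = x$2 * T2 x + x$3 * T3 x"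
definition "P3 x = x$3 * T3 x"

definition "Q x = x$1 * x$4 + x$1 * x$5 + x$2 * x$5"

lemmas partial_sum_defs = S1_def S2_def S3_def T1_def T2_def T3_def P1_def P2_def P3_def

lemma S_pos:
  assumes "x \<in> pos_orthant"
  shows "0 < S3 x" "S3 x < S2 x" "S2 x < S1 x"
  using assms by (simp_all add: pos_orthant_iff S1_def S2_def S3_def)

lemma T_pos:
  assumes "x \<in> pos_orthant"
  shows "0 < T3 x" "T3 x < T2 x" "T2 x < T1 x"
  using assms by (simp_all add: pos_orthant_iff T1_def T2_def T3_def)

lemma P_pos:
  assumes "x \<in> pos_orthant"
  shows "0 < P3 x" "P3 x < P2 x" "P2 x < P1 x"
  using assms by (simp_all add: pos_orthant_iff partial_sum_defs)

lemma P_nonzero: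
  assumes "x \<in> pos_orthant"
  shows "P1 x \<noteq> 0" "P2 x \<noteq> 0" "P3 x \<noteq> 0"
  using P_pos[OF assms] by auto

lemma P_eq_S:
  "P1 x = S1 x * T1 x - x$4 * S2 x - x$5 * S3 x" "P2 x = S2 x * T2 x - x$5 * S3 x"
  "P3 x = S3 x * T3 x"
  by (simp_all add: partial_sum_defs algebra_simps)

lemma tau13_eq: "tau13 x = Q x * P2 x / (x$2 * x$5 * P1 x)"
  by (simp add: tau13_def Q_def P1_def P2_def T1_def T2_def T3_def algebra_simps)

lemma smooth_on_tau13: "smooth_on pos_orthant tau13"
  unfolding smooth_on_def
proof
  fix k
  have "x$2 * x$5 * P1 x \<noteq> 0" if "x \<in> pos_orthant" for x
    using that P_pos[OF that] by (simp add: pos_orthant_iff)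
  then have "Ck_on k pos_orthant (\<lambda>x. Q x * P2 x * inverse (x$2 * x$5 * P1 x))"
    unfolding Q_def P1_def P2_def T1_def T2_def T3_def
    by (intro Ck_on_mult Ck_on_add Ck_on_component Ck_on_inverse open_pos_orthant)
  then show "Ck_on k pos_orthant tau13"
    by (rule Ck_on_cong[OF open_pos_orthant, rotated]) (simp add: tau13_eq divide_inverse)
qed

lemma D_tau13:
  assumes x: "x \<in> pos_orthant"
  shows "D1 tau13 x = 0" "D2 tau13 x = 0" "D3 tau13 x = 0" "D4 tau13 x = 0"
proof -
  define den where "den y = y$2 * y$5 * P1 y" for y
  define dQ where "dQ h = h$1 * x$4 + x$1 * h$4 + h$1 * x$5 + x$1 * h$5 + h$2 * x$5 + x$2 * h$5"
    for h :: "real^6"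
  define dP2 where "dP2 h = h$2 * x$5 + x$2 * h$5 + h$2 * x$6 + x$2 * h$6 + h$3 * x$6 + x$3 * h$6"
    for h :: "real^6"
  define dP1 where "dP1 h = dQ h + dP2 h + h$1 * x$6 + x$1 * h$6 - h$2 * x$5 - x$2 * h$5"
    for h :: "real^6"
  define dden where "dden h = (h$2 * x$5 + x$2 * h$5) * P1 x + x$2 * x$5 * dP1 h" for h :: "real^6"
  have nz: "den x \<noteq> 0"
    using x P_pos[OF x] by (simp add: den_def pos_orthant_iff)
  have num: "((\<lambda>y. Q y * P2 y) has_derivative (\<lambda>h. dQ h * P2 x + Q x * dP2 h)) (at x)"
    unfolding Q_def P2_def T2_def T3_def dQ_def dP2_def
    by (auto intro!: derivative_eq_intros ext simp: algebra_simps)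
  have "(den has_derivative dden) (at x)"
    unfolding den_def[abs_def] dden_def[abs_def] dP1_def dQ_def dP2_def P1_def T1_def T2_def T3_def
    by (auto intro!: derivative_eq_intros ext simp: algebra_simps)
  from has_derivative_divide'[OF num this nz]
  have d: "(tau13 has_derivative
      (\<lambda>h. ((dQ h * P2 x + Q x * dP2 h) * den x - Q x * P2 x * dden h) / (den x * den x))) (at x)"
    unfolding tau13_eq[abs_def] den_def .
  then have diff: "tau13 differentiable at x"
    by (auto simp: differentiable_def)
  show "D1 tau13 x = 0" "D2 tau13 x = 0" "D3 tau13 x = 0" "D4 tau13 x = 0"
    unfolding D_eq_frechet_derivative[OF diff] frechet_derivative_at[OF d, symmetric]
    by (simp_all add: den_def dQ_def dP1_def dP2_def dden_def Q_def P1_def P2_def T1_def T2_def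
        T3_def field1_def field2_def field3_def field4_def algebra_simps power2_eq_square)
qed

lemma is_solution_tau13: "is_solution tau13"
  unfolding is_solution_def using smooth_on_tau13 D_tau13 by blast

section \<open>Invariance of solutions along the flows\<close>

lemma solution_differentiable_at:
  assumes "is_solution \<tau>" "x \<in> pos_orthant"
  shows "\<tau> differentiable at x"
proof -
  have "Ck_on (Suc 0) pos_orthant \<tau>"
    using assms(1) by (simp add: is_solution_def smooth_on_def del: Ck_on.simps)
  then show ?thesis
    using assms(2) open_pos_orthant by (simp add: differentiable_on_eq_differentiable_at)
qed

lemma constant_along_curve:
  fixes f :: "'a::real_normed_vector \<Rightarrow> real" and g :: "real \<Rightarrow> 'a"
  assumes "\<And>\<sigma>. \<sigma> \<in> closed_segment a b \<Longrightarrow> f differentiable at (g \<sigma>)"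
    and "\<And>\<sigma>. \<sigma> \<in> closed_segment a b \<Longrightarrow> (g has_vector_derivative v \<sigma>) (at \<sigma>)"
    and "\<And>\<sigma>. \<sigma> \<in> closed_segment a b \<Longrightarrow> frechet_derivative f (at (g \<sigma>)) (v \<sigma>) = 0"
  shows "f (g b) = f (g a)"
proof -
  have "((f \<circ> g) has_field_derivative 0) (at \<sigma> within closed_segment a b)"
    if \<sigma>: "\<sigma> \<in> closed_segment a b" for \<sigma>
  proof -
    have "((f \<circ> g) has_derivative (\<lambda>h. frechet_derivative f (at (g \<sigma>)) (h *\<^sub>R v \<sigma>))) (at \<sigma>)"
      using diff_chain_at[OF assms(2)[OF \<sigma>, unfolded has_vector_derivative_def]
          frechet_derivative_works[THEN iffD1, OF assms(1)[OF \<sigma>]]]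
      by (simp add: comp_def)
    moreover have "(\<lambda>h. frechet_derivative f (at (g \<sigma>)) (h *\<^sub>R v \<sigma>)) = (*) 0"
      using linear_scale[OF linear_frechet_derivative[OF assms(1)[OF \<sigma>]]] assms(3)[OF \<sigma>] by auto
    ultimately show ?thesis
      unfolding has_field_derivative_def by (metis has_derivative_at_withinI)
  qed
  then obtain c where "\<forall>\<sigma>\<in>closed_segment a b. (f \<circ> g) \<sigma> = c"
    using has_field_derivative_zero_constant[of "closed_segment a b" "f \<circ> g"] by auto
  then show ?thesis by simp
qed

definition linked :: "real^6 \<Rightarrow> real^6 \<Rightarrow> bool" where
  "linked x y \<longleftrightarrow>
     x \<in> pos_orthant \<and> y \<in> pos_orthant \<and> (\<forall>\<tau>. is_solution \<tau> \<longrightarrow> \<tau> y = \<tau> x)"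

lemma linked_trans: "linked x y \<Longrightarrow> linked y z \<Longrightarrow> linked x z"
  by (auto simp: linked_def)

lemma linked_along_curve:
  assumes "\<And>\<sigma>. \<sigma> \<in> closed_segment a b \<Longrightarrow> g \<sigma> \<in> pos_orthant"
    and "\<And>\<sigma>. \<sigma> \<in> closed_segment a b \<Longrightarrow> (g has_vector_derivative v \<sigma>) (at \<sigma>)"
    and "\<And>\<tau> \<sigma>. is_solution \<tau> \<Longrightarrow> \<sigma> \<in> closed_segment a b \<Longrightarrow>
      frechet_derivative \<tau> (at (g \<sigma>)) (v \<sigma>) = 0"
  shows "linked (g a) (g b)"
  unfolding linked_def using assms
  by (auto intro!: constant_along_curve[where v = v] solution_differentiable_at)

lemma frechet_derivative_solution_eq_0:
  assumes "is_solution \<tau>" "y \<in> pos_orthant"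
  shows "frechet_derivative \<tau> (at y) (field3 y) = 0"
    and "frechet_derivative \<tau> (at y) (field4 y) = 0"
    and "frechet_derivative \<tau> (at y) (vec6 (y$1) (y$2) (y$3) 0 0 0) = 0"
    and "frechet_derivative \<tau> (at y) (vec6 0 0 0 (y$4) (y$5) (y$6)) = 0"
proof -
  note diff = solution_differentiable_at[OF assms]
  have D: "D1 \<tau> y = 0" "D2 \<tau> y = 0" "D3 \<tau> y = 0" "D4 \<tau> y = 0"
    using assms by (auto simp: is_solution_def)
  then show "frechet_derivative \<tau> (at y) (field3 y) = 0"
    "frechet_derivative \<tau> (at y) (field4 y) = 0"
    by (simp_all add: D_eq_frechet_derivative[OF diff])
  txt \<open>\<open>2 D1 + D2\<close> and \<open>D1 + 2 D2\<close> are three times the Euler operators of the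
    \<open>X\<close>- and of the \<open>Y\<close>-variables.\<close>
  show "frechet_derivative \<tau> (at y) (vec6 (y$1) (y$2) (y$3) 0 0 0) = 0"
    "frechet_derivative \<tau> (at y) (vec6 0 0 0 (y$4) (y$5) (y$6)) = 0"
    using D(1,2) unfolding D1_def D2_def linear_vec6[OF linear_frechet_derivative[OF diff]]
    by (simp_all add: pd_def algebra_simps)
qed

lemma one_minus_mult_pos:
  fixes a b s :: real
  assumes "0 < a" "a \<le> b" "s * b < 1"
  shows "0 < 1 - s * a"
proof (cases "s \<le> 0")
  case True
  then show ?thesis using mult_nonpos_nonneg[of s a] assms(1) by simp
next
  case False
  then have "s * a \<le> s * b" using assms(2) by (simp add: mult_left_mono)
  then show ?thesis using assms(3) by simp
qed

lemma segment_mult_less_one: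
  fixes \<sigma> s c :: real
  assumes "\<sigma> \<in> closed_segment 0 s" "s * c < 1" "0 < c"
  shows "\<sigma> * c < 1"
  using assms
  by (cases "0 \<le> s") (auto simp: closed_segment_eq_real_ivl
      intro: order.strict_trans1[OF mult_right_mono] order.strict_trans1[OF mult_nonpos_nonneg])

lemma riccati_has_derivative:
  "\<sigma> * a \<noteq> 1 \<Longrightarrow> ((\<lambda>\<sigma>. a / (1 - \<sigma> * a)) has_real_derivative (a / (1 - \<sigma> * a))\<^sup>2) (at \<sigma>)"
  by (auto intro!: derivative_eq_intros simp: field_simps power2_eq_square)

text \<open>The flows of \<open>field3\<close> and \<open>field4\<close>: in the partial sums they read
  \<open>S\<^sub>k \<mapsto> S\<^sub>k / (1 - s S\<^sub>k)\<close> and \<open>T\<^sub>k \<mapsto> T\<^sub>k / (1 - t T\<^sub>k)\<close>.\<close>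

definition flow3 :: "real \<Rightarrow> real^6 \<Rightarrow> real^6" where
  "flow3 s x = vec6 (S1 x / (1 - s * S1 x) - S2 x / (1 - s * S2 x))
     (S2 x / (1 - s * S2 x) - S3 x / (1 - s * S3 x)) (S3 x / (1 - s * S3 x))
     (x$4 * (1 - s * S2 x)) (x$5 * (1 - s * S3 x)) (x$6)"

definition flow4 :: "real \<Rightarrow> real^6 \<Rightarrow> real^6" where
  "flow4 t x = vec6 (x$1 * (1 - t * T1 x)) (x$2 * (1 - t * T2 x)) (x$3 * (1 - t * T3 x))
     (T1 x / (1 - t * T1 x) - T2 x / (1 - t * T2 x)) (T2 x / (1 - t * T2 x) - T3 x / (1 - t * T3 x))
     (T3 x / (1 - t * T3 x))"

lemma flow3_nth [simp]:
  "flow3 s x $ 1 = S1 x / (1 - s * S1 x) - S2 x / (1 - s * S2 x)"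
  "flow3 s x $ 2 = S2 x / (1 - s * S2 x) - S3 x / (1 - s * S3 x)"
  "flow3 s x $ 3 = S3 x / (1 - s * S3 x)"
  "flow3 s x $ 4 = x$4 * (1 - s * S2 x)" "flow3 s x $ 5 = x$5 * (1 - s * S3 x)"
  "flow3 s x $ 6 = x$6"
  by (simp_all add: flow3_def)

lemma flow4_nth [simp]:
  "flow4 t x $ 1 = x$1 * (1 - t * T1 x)" "flow4 t x $ 2 = x$2 * (1 - t * T2 x)"
  "flow4 t x $ 3 = x$3 * (1 - t * T3 x)"
  "flow4 t x $ 4 = T1 x / (1 - t * T1 x) - T2 x / (1 - t * T2 x)"
  "flow4 t x $ 5 = T2 x / (1 - t * T2 x) - T3 x / (1 - t * T3 x)"
  "flow4 t x $ 6 = T3 x / (1 - t * T3 x)"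
  by (simp_all add: flow4_def)

lemma flow3_0: "flow3 0 x = x"
  by (rule vec6_eqI) (simp_all add: S1_def S2_def S3_def)

lemma flow4_0: "flow4 0 x = x"
  by (rule vec6_eqI) (simp_all add: T1_def T2_def T3_def)

lemma flow3_denominators_pos:
  assumes "x \<in> pos_orthant" "s * S1 x < 1"
  shows "0 < 1 - s * S1 x" "0 < 1 - s * S2 x" "0 < 1 - s * S3 x"
  using S_pos[OF assms(1)] assms(2)
    one_minus_mult_pos[of "S2 x" "S1 x" s] one_minus_mult_pos[of "S3 x" "S1 x" s]
  by auto

lemma flow4_denominators_pos:
  assumes "x \<in> pos_orthant" "t * T1 x < 1"
  shows "0 < 1 - t * T1 x" "0 < 1 - t * T2 x" "0 < 1 - t * T3 x"
  using T_pos[OF assms(1)] assms(2)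
    one_minus_mult_pos[of "T2 x" "T1 x" t] one_minus_mult_pos[of "T3 x" "T1 x" t]
  by auto

lemma diff_divide_one_minus:
  fixes a b s :: real
  assumes "1 - s * a \<noteq> 0" "1 - s * b \<noteq> 0"
  shows "a / (1 - s * a) - b / (1 - s * b) = (a - b) / ((1 - s * a) * (1 - s * b))"
  using assms by (simp add: field_simps)

lemma flow3_in_pos_orthant:
  assumes "x \<in> pos_orthant" "s * S1 x < 1"
  shows "flow3 s x \<in> pos_orthant"
  using S_pos[OF assms(1)] flow3_denominators_pos[OF assms] assms(1)
  by (simp add: pos_orthant_iff diff_divide_one_minus)

lemma flow4_in_pos_orthant:
  assumes "x \<in> pos_orthant" "t * T1 x < 1"
  shows "flow4 t x \<in> pos_orthant"
  using T_pos[OF assms(1)] flow4_denominators_pos[OF assms] assms(1)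
  by (simp add: pos_orthant_iff diff_divide_one_minus)

lemma flow3_has_vector_derivative:
  assumes "x \<in> pos_orthant" "\<sigma> * S1 x < 1"
  shows "((\<lambda>\<sigma>. flow3 \<sigma> x) has_vector_derivative field3 (flow3 \<sigma> x)) (at \<sigma>)"
proof -
  note nz = flow3_denominators_pos[OF assms, THEN less_imp_neq, symmetric]
  define u where "u a = a / (1 - \<sigma> * a)" for a
  define v where "v = vec6 ((u (S1 x))\<^sup>2 - (u (S2 x))\<^sup>2) ((u (S2 x))\<^sup>2 - (u (S3 x))\<^sup>2)
    ((u (S3 x))\<^sup>2) (- x$4 * S2 x) (- x$5 * S3 x) 0"
  have "((\<lambda>\<sigma>. flow3 \<sigma> x) has_vector_derivative v) (at \<sigma>)"
    unfolding flow3_def v_def u_def using nz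
    by (intro has_vector_derivative_vec6 DERIV_diff riccati_has_derivative)
      (auto intro!: derivative_eq_intros)
  moreover have "v = field3 (flow3 \<sigma> x)"
    using nz unfolding v_def field3_def
    by (intro vec6_eqI)
      (simp_all add: u_def power2_eq_square algebra_simps, simp_all add: field_simps)
  ultimately show ?thesis by simp
qed

lemma flow4_has_vector_derivative:
  assumes "x \<in> pos_orthant" "\<sigma> * T1 x < 1"
  shows "((\<lambda>\<sigma>. flow4 \<sigma> x) has_vector_derivative field4 (flow4 \<sigma> x)) (at \<sigma>)"
proof -
  note nz = flow4_denominators_pos[OF assms, THEN less_imp_neq, symmetric]
  define u where "u a = a / (1 - \<sigma> * a)" for a
  define v where "v = vec6 (- x$1 * T1 x) (- x$2 * T2 x) (- x$3 * T3 x)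
    ((u (T1 x))\<^sup>2 - (u (T2 x))\<^sup>2) ((u (T2 x))\<^sup>2 - (u (T3 x))\<^sup>2) ((u (T3 x))\<^sup>2)"
  have "((\<lambda>\<sigma>. flow4 \<sigma> x) has_vector_derivative v) (at \<sigma>)"
    unfolding flow4_def v_def u_def using nz
    by (intro has_vector_derivative_vec6 DERIV_diff riccati_has_derivative)
      (auto intro!: derivative_eq_intros)
  moreover have "v = field4 (flow4 \<sigma> x)"
    using nz unfolding v_def field4_def
    by (intro vec6_eqI)
      (simp_all add: u_def power2_eq_square algebra_simps, simp_all add: field_simps)
  ultimately show ?thesis by simp
qed

lemma linked_flow3:
  assumes "x \<in> pos_orthant" "s * S1 x < 1"
  shows "linked x (flow3 s x)"
proof -
  have "\<sigma> * S1 x < 1" if "\<sigma> \<in> closed_segment 0 s" for \<sigma>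
    using segment_mult_less_one[OF that assms(2)] S_pos[OF assms(1)] by simp
  then have "linked (flow3 0 x) (flow3 s x)"
    using assms(1) flow3_in_pos_orthant flow3_has_vector_derivative
      frechet_derivative_solution_eq_0(1)[OF _ flow3_in_pos_orthant]
    by (intro linked_along_curve[where v = "\<lambda>\<sigma>. field3 (flow3 \<sigma> x)"]) auto
  then show ?thesis by (simp add: flow3_0)
qed

lemma linked_flow4:
  assumes "x \<in> pos_orthant" "t * T1 x < 1"
  shows "linked x (flow4 t x)"
proof -
  have "\<sigma> * T1 x < 1" if "\<sigma> \<in> closed_segment 0 t" for \<sigma>
    using segment_mult_less_one[OF that assms(2)] T_pos[OF assms(1)] by simp
  then have "linked (flow4 0 x) (flow4 t x)"
    using assms(1) flow4_in_pos_orthant flow4_has_vector_derivative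
      frechet_derivative_solution_eq_0(2)[OF _ flow4_in_pos_orthant]
    by (intro linked_along_curve[where v = "\<lambda>\<sigma>. field4 (flow4 \<sigma> x)"]) auto
  then show ?thesis by (simp add: flow4_0)
qed

definition scaleX :: "real \<Rightarrow> real^6 \<Rightarrow> real^6" where
  "scaleX a x = vec6 (a * x$1) (a * x$2) (a * x$3) (x$4) (x$5) (x$6)"

definition scaleY :: "real \<Rightarrow> real^6 \<Rightarrow> real^6" where
  "scaleY a x = vec6 (x$1) (x$2) (x$3) (a * x$4) (a * x$5) (a * x$6)"

lemma linked_scaleX:
  assumes "x \<in> pos_orthant" "0 < a"
  shows "linked x (scaleX a x)"
proof -
  define v where "v \<sigma> = vec6 (exp \<sigma> * x$1) (exp \<sigma> * x$2) (exp \<sigma> * x$3) 0 0 0" for \<sigma>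
  have orthant: "scaleX (exp \<sigma>) x \<in> pos_orthant" for \<sigma>
    using assms(1) by (simp add: scaleX_def pos_orthant_iff)
  have "((\<lambda>\<sigma>. scaleX (exp \<sigma>) x) has_vector_derivative v \<sigma>) (at \<sigma>)" for \<sigma>
    unfolding scaleX_def v_def
    by (intro has_vector_derivative_vec6) (auto intro!: derivative_eq_intros)
  moreover have "frechet_derivative \<tau> (at (scaleX (exp \<sigma>) x)) (v \<sigma>) = 0"
    if "is_solution \<tau>" for \<tau> \<sigma>
    using frechet_derivative_solution_eq_0(3)[OF that orthant] by (simp add: scaleX_def v_def)
  ultimately have "linked (scaleX (exp 0) x) (scaleX (exp (ln a)) x)"
    using orthant by (intro linked_along_curve)
  moreover have "scaleX 1 x = x" by (intro vec6_eqI) (simp_all add: scaleX_def)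
  ultimately show ?thesis using assms(2) by simp
qed

lemma linked_scaleY:
  assumes "x \<in> pos_orthant" "0 < a"
  shows "linked x (scaleY a x)"
proof -
  define v where "v \<sigma> = vec6 0 0 0 (exp \<sigma> * x$4) (exp \<sigma> * x$5) (exp \<sigma> * x$6)" for \<sigma>
  have orthant: "scaleY (exp \<sigma>) x \<in> pos_orthant" for \<sigma>
    using assms(1) by (simp add: scaleY_def pos_orthant_iff)
  have "((\<lambda>\<sigma>. scaleY (exp \<sigma>) x) has_vector_derivative v \<sigma>) (at \<sigma>)" for \<sigma>
    unfolding scaleY_def v_def
    by (intro has_vector_derivative_vec6) (auto intro!: derivative_eq_intros)
  moreover have "frechet_derivative \<tau> (at (scaleY (exp \<sigma>) x)) (v \<sigma>) = 0"
    if "is_solution \<tau>" for \<tau> \<sigma>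
    using frechet_derivative_solution_eq_0(4)[OF that orthant] by (simp add: scaleY_def v_def)
  ultimately have "linked (scaleY (exp 0) x) (scaleY (exp (ln a)) x)"
    using orthant by (intro linked_along_curve)
  moreover have "scaleY 1 x = x" by (intro vec6_eqI) (simp_all add: scaleY_def)
  ultimately show ?thesis using assms(2) by simp
qed

section \<open>Invariant coordinates\<close>

lemma S_flow3:
  "S1 (flow3 s x) = S1 x / (1 - s * S1 x)" "S2 (flow3 s x) = S2 x / (1 - s * S2 x)"
  "S3 (flow3 s x) = S3 x / (1 - s * S3 x)"
  by (simp_all add: S1_def[of "flow3 s x"] S2_def[of "flow3 s x"] S3_def[of "flow3 s x"])

lemma P_flow3:
  assumes "x \<in> pos_orthant" "s * S1 x < 1"
  shows "P1 (flow3 s x) = P1 x / (1 - s * S1 x)" "P2 (flow3 s x) = P2 x / (1 - s * S2 x)"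
    "P3 (flow3 s x) = P3 x / (1 - s * S3 x)"
  using flow3_denominators_pos[OF assms]
  by (simp_all add: P_eq_S S_flow3 T1_def T2_def T3_def divide_simps) (simp_all add: algebra_simps)

lemma T_flow4:
  "T1 (flow4 t x) = T1 x / (1 - t * T1 x)" "T2 (flow4 t x) = T2 x / (1 - t * T2 x)"
  "T3 (flow4 t x) = T3 x / (1 - t * T3 x)"
  by (simp_all add: T1_def[of "flow4 t x"] T2_def[of "flow4 t x"] T3_def[of "flow4 t x"])

lemma P_flow4:
  assumes "x \<in> pos_orthant" "t * T1 x < 1"
  shows "P1 (flow4 t x) = P1 x" "P2 (flow4 t x) = P2 x" "P3 (flow4 t x) = P3 x"
  using flow4_denominators_pos[OF assms]
  by (simp_all add: P1_def[of "flow4 t x"] P2_def[of "flow4 t x"] P3_def[of "flow4 t x"] T_flow4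
      P1_def P2_def P3_def)

lemma S_flow4:
  "S1 (flow4 t x) = S1 x - t * P1 x" "S2 (flow4 t x) = S2 x - t * P2 x"
  "S3 (flow4 t x) = S3 x - t * P3 x"
  by (simp_all add: S1_def S2_def S3_def P1_def P2_def P3_def algebra_simps)

lemma SP_scaleX:
  "S1 (scaleX a x) = a * S1 x" "S2 (scaleX a x) = a * S2 x" "S3 (scaleX a x) = a * S3 x"
  "P1 (scaleX a x) = a * P1 x" "P2 (scaleX a x) = a * P2 x" "P3 (scaleX a x) = a * P3 x"
  by (simp_all add: scaleX_def partial_sum_defs algebra_simps)

lemma SP_scaleY:
  "S1 (scaleY a x) = S1 x" "S2 (scaleY a x) = S2 x" "S3 (scaleY a x) = S3 x"
  "P1 (scaleY a x) = a * P1 x" "P2 (scaleY a x) = a * P2 x" "P3 (scaleY a x) = a * P3 x"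
  by (simp_all add: scaleY_def partial_sum_defs algebra_simps)

definition "c1 x = S1 x / P1 x"
definition "c2 x = S2 x / P2 x"
definition "c3 x = S3 x / P3 x"
definition "w1 x = 1 / P1 x"
definition "w2 x = 1 / P2 x"
definition "w3 x = 1 / P3 x"

lemmas cw_defs = c1_def c2_def c3_def w1_def w2_def w3_def

lemma cw_flow3:
  assumes "x \<in> pos_orthant" "s * S1 x < 1"
  shows "c1 (flow3 s x) = c1 x" "c2 (flow3 s x) = c2 x" "c3 (flow3 s x) = c3 x"
    "w1 (flow3 s x) = w1 x - s * c1 x" "w2 (flow3 s x) = w2 x - s * c2 x"
    "w3 (flow3 s x) = w3 x - s * c3 x"
  using flow3_denominators_pos[OF assms] P_nonzero[OF assms(1)]
  by (simp_all add: cw_defs S_flow3 P_flow3[OF assms] field_simps)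

lemma cw_flow4:
  assumes "x \<in> pos_orthant" "t * T1 x < 1"
  shows "c1 (flow4 t x) = c1 x - t" "c2 (flow4 t x) = c2 x - t" "c3 (flow4 t x) = c3 x - t"
    "w1 (flow4 t x) = w1 x" "w2 (flow4 t x) = w2 x" "w3 (flow4 t x) = w3 x"
  using P_nonzero[OF assms(1)]
  by (simp_all add: cw_defs S_flow4 P_flow4[OF assms] field_simps)

lemma cw_scaleX:
  assumes "a \<noteq> 0"
  shows "c1 (scaleX a x) = c1 x" "c2 (scaleX a x) = c2 x" "c3 (scaleX a x) = c3 x"
    "w1 (scaleX a x) = w1 x / a" "w2 (scaleX a x) = w2 x / a" "w3 (scaleX a x) = w3 x / a"
  using assms by (simp_all add: cw_defs SP_scaleX)

lemma cw_scaleY: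
  assumes "a \<noteq> 0"
  shows "c1 (scaleY a x) = c1 x / a" "c2 (scaleY a x) = c2 x / a" "c3 (scaleY a x) = c3 x / a"
    "w1 (scaleY a x) = w1 x / a" "w2 (scaleY a x) = w2 x / a" "w3 (scaleY a x) = w3 x / a"
  using assms by (simp_all add: cw_defs SP_scaleY)

lemma cw_differences:
  assumes "x \<in> pos_orthant"
  shows "c1 x - c2 x = - (x$1 * (x$2 * x$4 + x$3 * x$4 + x$3 * x$5)) / (P1 x * P2 x)"
    "c2 x - c3 x = - (x$2 * x$3 * x$5) / (P2 x * P3 x)"
    "c1 x - c3 x = - (x$3 * Q x) / (P1 x * P3 x)"
    "w1 x - w2 x = - (x$1 * T1 x) / (P1 x * P2 x)"
    "w2 x - w3 x = - (x$2 * T2 x) / (P2 x * P3 x)"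
  using P_nonzero[OF assms]
  by (simp_all add: cw_defs divide_simps) (simp_all add: partial_sum_defs Q_def algebra_simps)

lemma tau13_eq_c_ratio:
  assumes "x \<in> pos_orthant"
  shows "tau13 x = (c1 x - c3 x) / (c2 x - c3 x)"
  using P_nonzero[OF assms] assms
  by (simp add: cw_differences[OF assms] tau13_eq pos_orthant_iff field_simps)

lemma c2_less_c3:
  assumes "x \<in> pos_orthant"
  shows "c2 x < c3 x"
proof -
  have "c2 x - c3 x < 0"
    using P_pos[OF assms] assms by (simp add: cw_differences[OF assms] pos_orthant_iff)
  then show ?thesis by simp
qed

lemma cw_determinant_pos:
  assumes "x \<in> pos_orthant"
  shows "0 < (c1 x - c2 x) * (w2 x - w3 x) - (c2 x - c3 x) * (w1 x - w2 x)"
proof -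
  have "(c1 x - c2 x) * (w2 x - w3 x) - (c2 x - c3 x) * (w1 x - w2 x)
      = x$1 * x$2 * x$4 / (P1 x * P2 x * P3 x)"
    using P_nonzero[OF assms] unfolding cw_differences[OF assms]
    by (simp add: divide_simps) (simp add: P2_def T1_def T2_def T3_def algebra_simps)
  then show ?thesis
    using P_pos[OF assms] assms by (simp add: pos_orthant_iff)
qed

lemma cw_injective:
  assumes "x \<in> pos_orthant" "y \<in> pos_orthant"
    and "c1 x = c1 y" "c2 x = c2 y" "c3 x = c3 y" "w1 x = w1 y" "w2 x = w2 y" "w3 x = w3 y"
  shows "x = y"
proof -
  have P: "P1 x = P1 y" "P2 x = P2 y" "P3 x = P3 y"
    using assms(6-8) by (simp_all add: cw_defs)
  moreover have "S1 x = S1 y" "S2 x = S2 y" "S3 x = S3 y"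
    using assms(3-5) P P_nonzero[OF assms(1)] by (simp_all add: cw_defs)
  ultimately show ?thesis
    using assms(1,2)
    by (intro vec6_eqI) (auto simp: partial_sum_defs pos_orthant_iff)
qed

section \<open>Normal form\<close>

text \<open>The initial \<open>flow4 (-1)\<close> makes
  \<open>T\<^sub>1 < 1\<close>, so that the translation by \<open>t\<close> close to \<open>1\<close> between the two shears is
  defined; this translation produces the constant term of the map on \<open>w\<close>.\<close>

definition compose_flows :: "real \<Rightarrow> real \<Rightarrow> real \<Rightarrow> real \<Rightarrow> real \<Rightarrow> real^6 \<Rightarrow> real^6" where
  "compose_flows s1 t s2 \<beta> \<alpha> x =
     scaleX \<alpha> (scaleY \<beta> (flow3 s2 (flow4 t (flow3 s1 (flow4 (-1) x)))))"

definition flows_defined :: "real \<Rightarrow> real \<Rightarrow> real \<Rightarrow> real^6 \<Rightarrow> bool" where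
  "flows_defined s1 t s2 x \<longleftrightarrow> x \<in> pos_orthant \<and> s1 * S1 (flow4 (-1) x) < 1
     \<and> t * T1 (flow3 s1 (flow4 (-1) x)) < 1 \<and> s2 * S1 (flow4 t (flow3 s1 (flow4 (-1) x))) < 1"

lemma flow4_minus_one_defined: "x \<in> pos_orthant \<Longrightarrow> (-1) * T1 x < 1"
  using T_pos[of x] by simp

lemma linked_compose_flows:
  assumes "flows_defined s1 t s2 x" "0 < \<beta>" "0 < \<alpha>"
  shows "linked x (compose_flows s1 t s2 \<beta> \<alpha> x)"
proof -
  define x1 where "x1 = flow4 (-1) x"
  define x2 where "x2 = flow3 s1 x1"
  define x3 where "x3 = flow4 t x2"
  define x4 where "x4 = flow3 s2 x3"
  have x: "x \<in> pos_orthant" and s1: "s1 * S1 x1 < 1" and t: "t * T1 x2 < 1" and s2: "s2 * S1 x3 < 1"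
    using assms(1) by (simp_all add: flows_defined_def x1_def x2_def x3_def)
  have "linked x x1" "linked x1 x2" "linked x2 x3" and x34: "linked x3 x4"
    using linked_flow4[OF x flow4_minus_one_defined[OF x]] linked_flow3[OF _ s1]
      linked_flow4[OF _ t] linked_flow3[OF _ s2]
    by (auto simp: linked_def x1_def x2_def x3_def x4_def)
  moreover have "linked x4 (scaleY \<beta> x4)" "linked (scaleY \<beta> x4) (scaleX \<alpha> (scaleY \<beta> x4))"
    using x34 linked_scaleY[OF _ assms(2)] linked_scaleX[OF _ assms(3)] by (auto simp: linked_def)
  ultimately show ?thesis
    unfolding compose_flows_def x1_def[symmetric] x2_def[symmetric] x3_def[symmetric]
      x4_def[symmetric]
    by (meson linked_trans)
qed

lemma cw_compose_flows:
  assumes "flows_defined s1 t s2 x" "\<beta> \<noteq> 0" "\<alpha> \<noteq> 0"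
  defines "y \<equiv> compose_flows s1 t s2 \<beta> \<alpha> x"
  shows "c1 y = (c1 x + 1 - t) / \<beta>" "c2 y = (c2 x + 1 - t) / \<beta>" "c3 y = (c3 x + 1 - t) / \<beta>"
    and "w1 y = (w1 x - s1 * (c1 x + 1) - s2 * (c1 x + 1 - t)) / (\<beta> * \<alpha>)"
    and "w2 y = (w2 x - s1 * (c2 x + 1) - s2 * (c2 x + 1 - t)) / (\<beta> * \<alpha>)"
    and "w3 y = (w3 x - s1 * (c3 x + 1) - s2 * (c3 x + 1 - t)) / (\<beta> * \<alpha>)"
proof -
  define x1 where "x1 = flow4 (-1) x"
  define x2 where "x2 = flow3 s1 x1"
  define x3 where "x3 = flow4 t x2"
  have x: "x \<in> pos_orthant" and s1: "s1 * S1 x1 < 1" and t: "t * T1 x2 < 1" and s2: "s2 * S1 x3 < 1"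
    using assms(1) by (simp_all add: flows_defined_def x1_def x2_def x3_def)
  note m1 = flow4_minus_one_defined[OF x]
  have x1: "x1 \<in> pos_orthant" and x2: "x2 \<in> pos_orthant" and x3: "x3 \<in> pos_orthant"
    using flow4_in_pos_orthant[OF x m1] flow3_in_pos_orthant[OF _ s1] flow4_in_pos_orthant[OF _ t]
    by (simp_all add: x1_def x2_def x3_def)
  have y: "y = scaleX \<alpha> (scaleY \<beta> (flow3 s2 x3))"
    by (simp add: y_def compose_flows_def x1_def x2_def x3_def)
  show "c1 y = (c1 x + 1 - t) / \<beta>" "c2 y = (c2 x + 1 - t) / \<beta>" "c3 y = (c3 x + 1 - t) / \<beta>"
    "w1 y = (w1 x - s1 * (c1 x + 1) - s2 * (c1 x + 1 - t)) / (\<beta> * \<alpha>)"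
    "w2 y = (w2 x - s1 * (c2 x + 1) - s2 * (c2 x + 1 - t)) / (\<beta> * \<alpha>)"
    "w3 y = (w3 x - s1 * (c3 x + 1) - s2 * (c3 x + 1 - t)) / (\<beta> * \<alpha>)"
    using cw_flow3[OF x3 s2] cw_flow4[OF x2 t, folded x3_def] cw_flow3[OF x1 s1, folded x2_def]
      cw_flow4[OF x m1, folded x1_def]
    unfolding y cw_scaleX[OF assms(3)] cw_scaleY[OF assms(2)]
    by (simp_all add: algebra_simps)
qed

lemma cramer_2x2:
  fixes A1 B1 A2 B2 R1 R2 :: "'a::field"
  assumes "A1 * B2 - A2 * B1 \<noteq> 0"
  defines "\<Delta> \<equiv> A1 * B2 - A2 * B1"
  shows "(R1 * B2 - R2 * B1) / \<Delta> * A1 + (A1 * R2 - A2 * R1) / \<Delta> * B1 = R1"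
    and "(R1 * B2 - R2 * B1) / \<Delta> * A2 + (A1 * R2 - A2 * R1) / \<Delta> * B2 = R2"
  using assms by (simp_all add: \<Delta>_def divide_simps) (simp_all add: algebra_simps)

text \<open>Parameters moving \<open>x\<close> into normal form relative to the base point \<open>p\<close>:
  \<open>\<beta>\<close> and the shift \<open>t\<close> match \<open>c\<^sub>2, c\<^sub>3\<close> with those of \<open>p\<close>, \<open>nf_target\<close> is the resulting
  image of \<open>c\<^sub>1\<close>, and \<open>(\<mu>, \<nu>, \<gamma>)\<close> solve \<open>w\<^sub>k(x) = \<mu> + \<nu> c\<^sub>k' + \<gamma> w\<^sub>k(p)\<close>, where
  \<open>c\<^sub>k'\<close> are the image points, by Cramer's rule.\<close>

definition "nf_beta p x = (c2 x - c3 x) / (c2 p - c3 p)"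
definition "nf_shift p x = 1 + c3 x - nf_beta p x * c3 p"
definition "nf_target p x = (c1 x - c3 x) / nf_beta p x + c3 p"
definition "nf_det p x = (nf_target p x - c2 p) * (w2 p - w3 p) - (c2 p - c3 p) * (w1 p - w2 p)"
definition "nf_nu p x =
  ((w1 x - w2 x) * (w2 p - w3 p) - (w2 x - w3 x) * (w1 p - w2 p)) / nf_det p x"
definition "nf_gamma p x =
  ((nf_target p x - c2 p) * (w2 x - w3 x) - (c2 p - c3 p) * (w1 x - w2 x)) / nf_det p x"
definition "nf_mu p x = w3 x - nf_nu p x * c3 p - nf_gamma p x * w3 p"
definition "nf_shear1 p x = nf_mu p x / nf_shift p x"
definition "nf_shear2 p x = nf_nu p x / nf_beta p x - nf_shear1 p x"
definition "nf_alpha p x = nf_gamma p x / nf_beta p x"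

definition normal_form :: "real^6 \<Rightarrow> real^6 \<Rightarrow> real^6" where
  "normal_form p x =
     compose_flows (nf_shear1 p x) (nf_shift p x) (nf_shear2 p x) (nf_beta p x) (nf_alpha p x) x"

definition nf_admissible :: "real^6 \<Rightarrow> real^6 \<Rightarrow> bool" where
  "nf_admissible p x \<longleftrightarrow> flows_defined (nf_shear1 p x) (nf_shift p x) (nf_shear2 p x) x
     \<and> 0 < nf_beta p x \<and> nf_shift p x \<noteq> 0 \<and> nf_det p x \<noteq> 0 \<and> 0 < nf_gamma p x"

lemma linked_normal_form: "nf_admissible p x \<Longrightarrow> linked x (normal_form p x)"
  unfolding nf_admissible_def normal_form_def nf_alpha_def
  by (auto intro: linked_compose_flows)

lemma normal_form_parameters_fit:
  assumes p: "p \<in> pos_orthant" and x: "nf_admissible p x"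
  shows "c1 x + 1 - nf_shift p x = nf_beta p x * nf_target p x"
    and "c2 x + 1 - nf_shift p x = nf_beta p x * c2 p"
    and "c3 x + 1 - nf_shift p x = nf_beta p x * c3 p"
    and "w1 x = nf_mu p x + nf_nu p x * nf_target p x + nf_gamma p x * w1 p"
    and "w2 x = nf_mu p x + nf_nu p x * c2 p + nf_gamma p x * w2 p"
    and "w3 x = nf_mu p x + nf_nu p x * c3 p + nf_gamma p x * w3 p"
proof -
  have \<beta>: "0 < nf_beta p x" and det: "nf_det p x \<noteq> 0"
    using x by (simp_all add: nf_admissible_def)
  have "c2 p \<noteq> c3 p"
    using c2_less_c3[OF p] by simp
  then have "c2 x - c3 x = nf_beta p x * (c2 p - c3 p)"
    by (simp add: nf_beta_def)
  then show "c1 x + 1 - nf_shift p x = nf_beta p x * nf_target p x"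
    "c2 x + 1 - nf_shift p x = nf_beta p x * c2 p" "c3 x + 1 - nf_shift p x = nf_beta p x * c3 p"
    using \<beta> by (simp_all add: nf_shift_def nf_target_def field_simps)
  have "nf_nu p x * (nf_target p x - c2 p) + nf_gamma p x * (w1 p - w2 p) = w1 x - w2 x"
    "nf_nu p x * (c2 p - c3 p) + nf_gamma p x * (w2 p - w3 p) = w2 x - w3 x"
    using cramer_2x2[OF det[unfolded nf_det_def], of "w1 x - w2 x" "w2 x - w3 x"]
    by (simp_all add: nf_nu_def nf_gamma_def nf_det_def)
  then show "w1 x = nf_mu p x + nf_nu p x * nf_target p x + nf_gamma p x * w1 p"
    "w2 x = nf_mu p x + nf_nu p x * c2 p + nf_gamma p x * w2 p"
    "w3 x = nf_mu p x + nf_nu p x * c3 p + nf_gamma p x * w3 p"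
    by (simp_all add: nf_mu_def algebra_simps)
qed

lemma cw_normal_form:
  assumes p: "p \<in> pos_orthant" and x: "nf_admissible p x"
  shows "c1 (normal_form p x) = nf_target p x" "c2 (normal_form p x) = c2 p"
    "c3 (normal_form p x) = c3 p" "w1 (normal_form p x) = w1 p" "w2 (normal_form p x) = w2 p"
    "w3 (normal_form p x) = w3 p"
proof -
  let ?\<beta> = "nf_beta p x" and ?t = "nf_shift p x" and ?s1 = "nf_shear1 p x"
    and ?s2 = "nf_shear2 p x" and ?\<gamma> = "nf_gamma p x"
  have \<beta>: "0 < ?\<beta>" and t: "?t \<noteq> 0" and \<gamma>: "0 < ?\<gamma>"
    using x by (simp_all add: nf_admissible_def)
  have "(w - ?s1 * (c + 1) - ?s2 * (c + 1 - ?t)) / (?\<beta> * nf_alpha p x) = w'"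
    if "c + 1 - ?t = ?\<beta> * c'" "w = nf_mu p x + nf_nu p x * c' + ?\<gamma> * w'" for c c' w w'
  proof -
    have "w - ?s1 * (c + 1) - ?s2 * (c + 1 - ?t) = w - ?s1 * ?t - (?s1 + ?s2) * ?\<beta> * c'"
      using that(1) by (simp add: algebra_simps)
    also have "\<dots> = ?\<gamma> * w'"
      using that(2) t \<beta> by (simp add: nf_shear1_def nf_shear2_def algebra_simps)
    finally show ?thesis using \<beta> \<gamma> by (simp add: nf_alpha_def)
  qed
  then show "c1 (normal_form p x) = nf_target p x" "c2 (normal_form p x) = c2 p"
    "c3 (normal_form p x) = c3 p" "w1 (normal_form p x) = w1 p" "w2 (normal_form p x) = w2 p"
    "w3 (normal_form p x) = w3 p"
    using x \<beta> \<gamma> normal_form_parameters_fit[OF p x] unfolding normal_form_def nf_admissible_def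
    by (simp_all add: cw_compose_flows nf_alpha_def)
qed

lemma nf_target_eq_tau13:
  assumes "p \<in> pos_orthant" "x \<in> pos_orthant"
  shows "nf_target p x = (c2 p - c3 p) * tau13 x + c3 p"
  using c2_less_c3[OF assms(1)] c2_less_c3[OF assms(2)]
  by (simp add: nf_target_def nf_beta_def tau13_eq_c_ratio[OF assms(2)])

lemma normal_form_eq_if_tau13_eq:
  assumes p: "p \<in> pos_orthant" and x: "nf_admissible p x" and y: "nf_admissible p y"
    and "tau13 x = tau13 y"
  shows "normal_form p x = normal_form p y"
proof -
  have "x \<in> pos_orthant" "y \<in> pos_orthant"
    "normal_form p x \<in> pos_orthant" "normal_form p y \<in> pos_orthant"
    using linked_normal_form[OF x] linked_normal_form[OF y] by (simp_all add: linked_def)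
  then show ?thesis
    using assms(4)
    by (intro cw_injective)
      (simp_all add: cw_normal_form[OF p x] cw_normal_form[OF p y] nf_target_eq_tau13[OF p])
qed

lemma solution_eq_if_tau13_eq:
  assumes "is_solution \<tau>" "p \<in> pos_orthant" "nf_admissible p x" "nf_admissible p y"
    and "tau13 x = tau13 y"
  shows "\<tau> x = \<tau> y"
proof -
  have "\<tau> x = \<tau> (normal_form p x)" "\<tau> y = \<tau> (normal_form p y)"
    using linked_normal_form[OF assms(3)] linked_normal_form[OF assms(4)] assms(1)
    by (auto simp: linked_def)
  then show ?thesis
    using normal_form_eq_if_tau13_eq[OF assms(2-5)] by simp
qed

section \<open>Admissibility near the base point\<close>

lemma isCont_eventually_less:
  fixes f :: "'a::t2_space \<Rightarrow> 'b::linorder_topology"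
  shows "isCont f p \<Longrightarrow> f p < c \<Longrightarrow> eventually (\<lambda>x. f x < c) (nhds p)"
  unfolding isCont_def tendsto_at_iff_tendsto_nhds by (rule order_tendstoD(2))

lemma isCont_eventually_greater:
  fixes f :: "'a::t2_space \<Rightarrow> 'b::linorder_topology"
  shows "isCont f p \<Longrightarrow> c < f p \<Longrightarrow> eventually (\<lambda>x. c < f x) (nhds p)"
  unfolding isCont_def tendsto_at_iff_tendsto_nhds by (rule order_tendstoD(1))

lemma continuous_partial_sums [continuous_intros]:
  assumes "continuous F g"
  shows "continuous F (\<lambda>x. S1 (g x))" "continuous F (\<lambda>x. S2 (g x))"
    "continuous F (\<lambda>x. S3 (g x))" "continuous F (\<lambda>x. T1 (g x))"
    "continuous F (\<lambda>x. T2 (g x))" "continuous F (\<lambda>x. T3 (g x))"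
  unfolding partial_sum_defs using assms by (auto intro!: continuous_intros)

lemma isCont_flow3:
  assumes "isCont f p" "isCont g p"
    and "f p * S1 (g p) \<noteq> 1" "f p * S2 (g p) \<noteq> 1" "f p * S3 (g p) \<noteq> 1"
  shows "isCont (\<lambda>x. flow3 (f x) (g x)) p"
  using assms unfolding flow3_def vec6_def by (auto intro!: continuous_intros)

lemma isCont_flow4:
  assumes "isCont f p" "isCont g p"
    and "f p * T1 (g p) \<noteq> 1" "f p * T2 (g p) \<noteq> 1" "f p * T3 (g p) \<noteq> 1"
  shows "isCont (\<lambda>x. flow4 (f x) (g x)) p"
  using assms unfolding flow4_def vec6_def by (auto intro!: continuous_intros)

context
  fixes p :: "real^6"
  assumes p: "p \<in> pos_orthant"
begin

lemma normal_form_parameters_at_base: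
  "nf_beta p p = 1" "nf_shift p p = 1" "nf_target p p = c1 p" "0 < nf_det p p" "nf_nu p p = 0"
  "nf_gamma p p = 1" "nf_mu p p = 0" "nf_shear1 p p = 0" "nf_shear2 p p = 0"
proof -
  have "c2 p \<noteq> c3 p" using c2_less_c3[OF p] by simp
  then show \<beta>: "nf_beta p p = 1" by (simp add: nf_beta_def)
  then show "nf_shift p p = 1" by (simp add: nf_shift_def)
  show target: "nf_target p p = c1 p" using \<beta> by (simp add: nf_target_def)
  show det: "0 < nf_det p p" using cw_determinant_pos[OF p] by (simp add: nf_det_def target)
  show \<nu>: "nf_nu p p = 0" by (simp add: nf_nu_def algebra_simps)
  show \<gamma>: "nf_gamma p p = 1" using det by (simp add: nf_gamma_def nf_det_def target)
  show "nf_mu p p = 0" using \<nu> \<gamma> by (simp add: nf_mu_def)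
  then show "nf_shear1 p p = 0" by (simp add: nf_shear1_def)
  then show "nf_shear2 p p = 0" using \<nu> by (simp add: nf_shear2_def)
qed

lemma isCont_normal_form_parameters:
  "isCont (nf_beta p) p" "isCont (nf_shift p) p" "isCont (nf_det p) p" "isCont (nf_gamma p) p"
  "isCont (nf_shear1 p) p" "isCont (nf_shear2 p) p"
proof -
  have cw: "isCont c1 p" "isCont c2 p" "isCont c3 p" "isCont w1 p" "isCont w2 p" "isCont w3 p"
    using P_nonzero[OF p]
    unfolding cw_defs[abs_def] P1_def[abs_def] P2_def[abs_def] P3_def[abs_def]
    by (auto intro!: continuous_intros)
  note vals = normal_form_parameters_at_base
  show \<beta>: "isCont (nf_beta p) p"
    unfolding nf_beta_def[abs_def] using cw c2_less_c3[OF p] by (auto intro!: continuous_intros)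
  show t: "isCont (nf_shift p) p"
    unfolding nf_shift_def[abs_def] using cw \<beta> by (auto intro!: continuous_intros)
  have target: "isCont (nf_target p) p"
    unfolding nf_target_def[abs_def] using cw \<beta> vals by (auto intro!: continuous_intros)
  show det: "isCont (nf_det p) p"
    unfolding nf_det_def[abs_def] using target by (auto intro!: continuous_intros)
  have \<nu>: "isCont (nf_nu p) p"
    unfolding nf_nu_def[abs_def] using cw det vals by (auto intro!: continuous_intros)
  show \<gamma>: "isCont (nf_gamma p) p"
    unfolding nf_gamma_def[abs_def] using cw det target vals by (auto intro!: continuous_intros)
  have "isCont (nf_mu p) p"
    unfolding nf_mu_def[abs_def] using cw \<nu> \<gamma> by (auto intro!: continuous_intros)
  then show "isCont (nf_shear1 p) p"
    unfolding nf_shear1_def[abs_def] using t vals by (auto intro!: continuous_intros)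
  then show "isCont (nf_shear2 p) p"
    unfolding nf_shear2_def[abs_def] using \<nu> \<beta> vals by (auto intro!: continuous_intros)
qed

lemma eventually_nf_admissible: "eventually (nf_admissible p) (nhds p)"
proof -
  note vals = normal_form_parameters_at_base and conts = isCont_normal_form_parameters
  have T: "0 < T1 p" "0 < T2 p" "0 < T3 p"
    using T_pos[OF p] by simp_all
  then have T': "T1 (flow4 (-1) p) < 1" "T2 (flow4 (-1) p) < 1" "T3 (flow4 (-1) p) < 1"
    by (simp_all add: T_flow4 field_simps)
  have x1: "isCont (\<lambda>x. flow4 (-1) x) p"
    using T by (intro isCont_flow4) (auto intro!: continuous_intros)
  have x2: "isCont (\<lambda>x. flow3 (nf_shear1 p x) (flow4 (-1) x)) p"
    using x1 conts vals by (intro isCont_flow3) auto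
  have "eventually (\<lambda>x. nf_shear1 p x * S1 (flow4 (-1) x) < 1) (nhds p)"
    using x1 conts vals by (intro isCont_eventually_less) (auto intro!: continuous_intros)
  moreover have
    "eventually (\<lambda>x. nf_shift p x * T1 (flow3 (nf_shear1 p x) (flow4 (-1) x)) < 1) (nhds p)"
    using x2 conts vals T'
    by (intro isCont_eventually_less) (auto intro!: continuous_intros simp: flow3_0)
  moreover have "eventually (\<lambda>x. nf_shear2 p x
      * S1 (flow4 (nf_shift p x) (flow3 (nf_shear1 p x) (flow4 (-1) x))) < 1) (nhds p)"
    using x2 conts vals T'
    by (intro isCont_eventually_less) (auto intro!: continuous_intros isCont_flow4 simp: flow3_0)
  moreover have "eventually (\<lambda>x. x \<in> pos_orthant) (nhds p)"
    by (rule eventually_nhds_in_open[OF open_pos_orthant p])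
  moreover have "eventually (\<lambda>x. 0 < nf_beta p x) (nhds p)"
    "eventually (\<lambda>x. 0 < nf_shift p x) (nhds p)"
    "eventually (\<lambda>x. 0 < nf_det p x) (nhds p)" "eventually (\<lambda>x. 0 < nf_gamma p x) (nhds p)"
    using conts vals by (auto intro!: isCont_eventually_greater)
  ultimately show ?thesis
    unfolding nf_admissible_def flows_defined_def by eventually_elim auto
qed

end

theorem mainTheorem2:
  shows "is_solution tau13 \<and>
    (\<forall>\<tau>. is_solution \<tau> \<longrightarrow>
       (\<forall>p\<in>pos_orthant. \<exists>U. open U \<and> p \<in> U \<and> U \<subseteq> pos_orthant \<and>
          (\<exists>F :: real \<Rightarrow> real. \<forall>x\<in>U. \<tau> x = F (tau13 x))))"
proof (intro conjI allI impI ballI)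
  show "is_solution tau13" by (rule is_solution_tau13)
next
  fix \<tau> p
  assume sol: "is_solution \<tau>" and p: "p \<in> pos_orthant"
  obtain U where U: "open U" "p \<in> U" "\<And>x. x \<in> U \<Longrightarrow> nf_admissible p x"
    using eventually_nf_admissible[OF p] unfolding eventually_nhds by blast
  have "U \<subseteq> pos_orthant"
    using U(3) by (auto simp: nf_admissible_def flows_defined_def)
  moreover have "\<exists>F. \<forall>x\<in>U. \<tau> x = F (tau13 x)"
    using function_factors_left_gen[of "\<lambda>x. x \<in> U" tau13 \<tau>]
      solution_eq_if_tau13_eq[OF sol p U(3) U(3)] by blast
  ultimately show "\<exists>U. open U \<and> p \<in> U \<and> U \<subseteq> pos_orthant \<and>
      (\<exists>F :: real \<Rightarrow> real. \<forall>x\<in>U. \<tau> x = F (tau13 x))"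
    using U(1,2) by blast
qed

end
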